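(* Let $q=2^f$ with $f\ge4$, let $q_0<q$ be a power of $2$ with $\gcd(q-1,q_0^2-1)=1$, and let $u\in\mathscr{U}_{q,q_0}$. Let $E$ be the pointwise stabilizer in $\mathrm{Aut}(\Gamma_u)$ of the vertex set $K'=\{\varepsilon\}\cup\Omega_\infty$. Then either $E$ is trivial, or $E$ is an elementary abelian $2$-group which leaves every pair $\{\Phi_{a,c},\Phi_{a,c}^{-1}\}$ ($a,c\in\mathbb{F}_q$) invariant.
   Context: For $a,c\in\mathbb{F}_q$ let $\Phi_{a,c}=\begin{bmatrix}1&0&0\\ a&1&0\\ c&a^{q_0}&1\end{bmatrix}$, $K=\{\Phi_{a,c}: a,c\in\mathbb{F}_q\}\le GL(3,\mathbb{F}_q)$ with identity $\varepsilon=\Phi_{0,0}$ and commutator subgroup $K'$; $\Omega_\infty=\{\Phi_{0,c}:c\in\mathbb{F}_q^*\}$ and for $v\in\mathbb{F}_q$, $\Omega_v=\{\Phi_{a,va^{q_0+1}}: a\in\mathbb{F}_q^*\}$. $\Gamma_u=\mathrm{Cay}(K,\Omega_u\cup\Omega_{u+1})$ is the graph with vertex set $K$, $x,y$ adjacent iff $xy^{-1}\in\Omega_u\cup\Omega_{u+1}$. $\mathscr{U}_{q,q_0}$ is the set of $u\in\mathbb{F}_q$ such that (U1) $u=(1+\eta^{q_0})/(\eta+\eta^{q_0})$ for some primitive element $\eta$ of $\mathbb{F}_q$, and (U2) $X^{q_0+1}+uX^{q_0}+(u+1)X+1$ has no roots in $\mathbb{F}_q$. *)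

theory Defs
  imports "HOL-Analysis.Analysis"
begin

type_synonym 'a mat3 = "'a^3^3"

definition Phi :: "nat \<Rightarrow> 'a::field \<Rightarrow> 'a \<Rightarrow> 'a mat3" where
  "Phi q0 a c = vector [vector [1, 0, 0], vector [a, 1, 0], vector [c, a ^ q0, 1]]"

definition KK :: "nat \<Rightarrow> 'a::field mat3 set" where
  "KK q0 = {Phi q0 a c | a c. True}"

definition Omega_inf :: "nat \<Rightarrow> 'a::field mat3 set" where
  "Omega_inf q0 = {Phi q0 0 c | c. c \<noteq> 0}"

definition Omega :: "nat \<Rightarrow> 'a::field \<Rightarrow> 'a mat3 set" where
  "Omega q0 v = {Phi q0 a (v * a ^ (q0 + 1)) | a. a \<noteq> 0}"

text \<open>The set K' = {epsilon} union Omega_infinity (identity is Phi 0 0).\<close>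
definition Kprime :: "nat \<Rightarrow> 'a::field mat3 set" where
  "Kprime q0 = {Phi q0 0 0} \<union> Omega_inf q0"

definition adj :: "nat \<Rightarrow> 'a::field \<Rightarrow> 'a mat3 \<Rightarrow> 'a mat3 \<Rightarrow> bool" where
  "adj q0 u x y \<longleftrightarrow> x \<in> KK q0 \<and> y \<in> KK q0 \<and>
      x ** matrix_inv y \<in> Omega q0 u \<union> Omega q0 (u + 1)"

text \<open>Graph automorphisms of Gamma_u, as permutations of the vertex set K
  (extended by the identity outside K so that they are unique as HOL functions).\<close>
definition graph_aut :: "nat \<Rightarrow> 'a::field \<Rightarrow> ('a mat3 \<Rightarrow> 'a mat3) set" where
  "graph_aut q0 u = {\<sigma>. bij_betw \<sigma> (KK q0) (KK q0) \<and> (\<forall>x. x \<notin> KK q0 \<longrightarrow> \<sigma> x = x) \<and>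
      (\<forall>x\<in>KK q0. \<forall>y\<in>KK q0. adj q0 u (\<sigma> x) (\<sigma> y) \<longleftrightarrow> adj q0 u x y)}"

definition stabE :: "nat \<Rightarrow> 'a::field \<Rightarrow> ('a mat3 \<Rightarrow> 'a mat3) set" where
  "stabE q0 u = {\<sigma> \<in> graph_aut q0 u. \<forall>x\<in>Kprime q0. \<sigma> x = x}"

definition primitive_elem :: "'a::field \<Rightarrow> bool" where
  "primitive_elem \<eta> \<longleftrightarrow> \<eta> \<noteq> 0 \<and> (\<forall>x. x \<noteq> 0 \<longrightarrow> (\<exists>k::nat. x = \<eta> ^ k))"

definition U_set :: "nat \<Rightarrow> 'a::{field,finite} set" where
  "U_set q0 = {u. (\<exists>\<eta>. primitive_elem \<eta> \<and> u = (1 + \<eta> ^ q0) / (\<eta> + \<eta> ^ q0)) \<and>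
      (\<forall>x. x ^ (q0 + 1) + u * x ^ q0 + (u + 1) * x + 1 \<noteq> 0)}"

end

theory Submission
  imports Defs "HOL-Number_Theory.Residues"
begin

(*
  Let sigma fix K' pointwise and let x = Phi a c.  Since sigma fixes every Phi 0 e, the vertices
  Phi 0 e adjacent to x and to sigma x are the same.  In characteristic 2 these are the e in
  {c + u A, c + u A + A} with A = a^(q0+1), and none if a = 0.  Comparing these two-element sets for
  x and sigma x = Phi a' c' gives A' = A and c' in {c, c + A}; as gcd(q0+1, q-1) = 1, the map
  a |-> a^(q0+1) is injective on nonzero elements, so a' = a and sigma x is x or
  Phi a (c + A) = x^-1.  A bijection acting on every pair {x, x^-1} as the identity or the swap is an
  involution, leaves the pairs invariant, and commutes with any other such bijection.
*)

lemma CHAR_eq_2_if_card_eq_pow2: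
  assumes "CARD('a::{field,finite}) = 2 ^ f"
  shows "CHAR('a) = 2"
proof -
  have "prime CHAR('a)"
    by (simp add: finite_imp_CHAR_pos prime_CHAR_semidom)
  moreover have "CHAR('a) dvd 2 ^ f"
    using CHAR_dvd_CARD[where 'a='a] assms by simp
  ultimately have "CHAR('a) dvd 2"
    using prime_dvd_power_nat by blast
  with \<open>prime CHAR('a)\<close> show ?thesis
    using dvd_imp_le[of "CHAR('a)" 2] prime_ge_2_nat[of "CHAR('a)"] by simp
qed

lemma two_eq_zero_CHAR_2:
  assumes "CHAR('a::semiring_1) = 2"
  shows "(2::'a) = 0"
  by (metis assms of_nat_CHAR of_nat_numeral)

lemma add_self_CHAR_2:
  assumes "CHAR('a::semiring_1) = 2"
  shows "x + x = (0::'a)"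
  by (simp flip: mult_2 add: two_eq_zero_CHAR_2[OF assms])

lemma power_card_minus_one_eq_one:
  fixes x :: "'a::{field,finite}"
  assumes "x \<noteq> 0"
  shows "x ^ (CARD('a) - 1) = 1"
proof -
  have "(\<Prod>y\<in>UNIV-{0}. x * y) = (\<Prod>y\<in>UNIV-{0}. y)"
    by (rule prod.reindex_bij_witness[of _ "\<lambda>y. y / x" "\<lambda>y. x * y"]) (use assms in auto)
  moreover have "(\<Prod>y\<in>UNIV-{0}. x * y) = x ^ (CARD('a) - 1) * (\<Prod>y\<in>UNIV-{0}. y)"
    by (simp add: prod.distrib card_Diff_singleton)
  moreover have "(\<Prod>y\<in>UNIV-{0::'a}. y) \<noteq> 0"
    by simp
  ultimately show ?thesis
    by simp
qed

lemma power_eq_imp_eq_if_coprime_card: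
  fixes a b :: "'a::{field,finite}"
  assumes "coprime n (CARD('a) - 1)" and "a \<noteq> 0" "b \<noteq> 0" and "a ^ n = b ^ n"
  shows "a = b"
proof -
  have "CARD('a) - 1 \<noteq> 0"
    using card_mono[of UNIV "{0::'a, 1}"] by simp
  then obtain s t where st: "(CARD('a) - 1) * s = n * t + 1"
    using bezout_nat assms(1) by (metis coprime_iff_gcd_eq_1 gcd.commute)
  have inverse_as_power: "x * (x ^ n) ^ t = 1" if "x \<noteq> 0" for x :: 'a
  proof -
    have "x * (x ^ n) ^ t = x ^ (n * t + 1)"
      by (simp add: power_mult)
    also have "\<dots> = x ^ ((CARD('a) - 1) * s)"
      by (simp only: st)
    also have "\<dots> = (x ^ (CARD('a) - 1)) ^ s"
      by (rule power_mult)
    finally show ?thesis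
      using power_card_minus_one_eq_one[OF that] by simp
  qed
  show ?thesis
    using inverse_as_power[OF assms(2)] inverse_as_power[OF assms(3)] assms(4)
    by (metis mult_cancel_right mult_zero_right zero_neq_one)
qed

lemma doubleton_translate_eq_CHAR_2:
  fixes x y s t :: "'a::ring_1"
  assumes "CHAR('a) = 2" and "{x, x + s} = {y, y + t}"
  shows "s = t \<and> (x = y \<or> x = y + t)"
  using assms(2) add_self_CHAR_2[OF assms(1)]
  by (auto simp: doubleton_eq_iff add.assoc) (metis add.assoc add_0_right)+

lemma matrix_inv_eqI:
  fixes A B :: "'a::semiring_1^'n^'n"
  assumes "A ** B = mat 1" and "B ** A = mat 1"
  shows "matrix_inv A = B"
proof -
  have inv: "A ** matrix_inv A = mat 1 \<and> matrix_inv A ** A = mat 1"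
    unfolding matrix_inv_def by (rule someI_ex) (use assms in blast)
  have "matrix_inv A = matrix_inv A ** (A ** B)"
    by (simp add: assms(1))
  also have "\<dots> = (matrix_inv A ** A) ** B"
    by (rule matrix_mul_assoc)
  also have "\<dots> = B"
    using inv by simp
  finally show ?thesis .
qed

definition fixes_or_swaps :: "'a set \<Rightarrow> ('a \<Rightarrow> 'a) \<Rightarrow> ('a \<Rightarrow> 'a) \<Rightarrow> bool" where
  "fixes_or_swaps K i \<sigma> \<longleftrightarrow>
    inj_on \<sigma> K \<and> (\<forall>x\<in>K. \<sigma> x = x \<or> \<sigma> x = i x) \<and> (\<forall>x. x \<notin> K \<longrightarrow> \<sigma> x = x)"

context
  fixes K :: "'a set" and i :: "'a \<Rightarrow> 'a"
  assumes involution: "\<And>x. x \<in> K \<Longrightarrow> i x \<in> K \<and> i (i x) = x"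
begin

lemma fixes_or_swaps_commutes_with_involution:
  assumes "fixes_or_swaps K i \<sigma>" and "x \<in> K"
  shows "\<sigma> (i x) = i (\<sigma> x)"
  using assms involution inj_onD[of \<sigma> K x "i x"] unfolding fixes_or_swaps_def by metis

lemma fixes_or_swaps_comp_self:
  assumes "fixes_or_swaps K i \<sigma>"
  shows "\<sigma> \<circ> \<sigma> = id"
proof
  fix x
  show "(\<sigma> \<circ> \<sigma>) x = id x"
    using assms involution fixes_or_swaps_commutes_with_involution[OF assms, of x]
    unfolding fixes_or_swaps_def by (cases "x \<in> K") auto
qed

lemma fixes_or_swaps_comp_commute:
  assumes "fixes_or_swaps K i \<sigma>" and "fixes_or_swaps K i \<tau>"
  shows "\<sigma> \<circ> \<tau> = \<tau> \<circ> \<sigma>"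
proof
  fix x
  show "(\<sigma> \<circ> \<tau>) x = (\<tau> \<circ> \<sigma>) x"
  proof (cases "x \<in> K")
    case True
    then have "\<sigma> x = x \<or> \<sigma> x = i x" and "\<tau> x = x \<or> \<tau> x = i x"
      using assms unfolding fixes_or_swaps_def by auto
    then show ?thesis
      using True involution fixes_or_swaps_commutes_with_involution[OF assms(1) True]
        fixes_or_swaps_commutes_with_involution[OF assms(2) True]
      by auto
  next
    case False
    then show ?thesis
      using assms unfolding fixes_or_swaps_def by simp
  qed
qed

lemma fixes_or_swaps_image_pair:
  assumes "fixes_or_swaps K i \<sigma>" and "x \<in> K"
  shows "\<sigma> ` {x, i x} = {x, i x}"
  using assms involution fixes_or_swaps_commutes_with_involution[OF assms]
  unfolding fixes_or_swaps_def by auto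

end

lemma Phi_eq_iff: "Phi q0 a c = Phi q0 b d \<longleftrightarrow> a = b \<and> c = d"
  by (auto simp: Phi_def vec_eq_iff forall_3)

lemma Phi_0_0: "q0 > 0 \<Longrightarrow> Phi q0 0 0 = (mat 1 :: 'a::field mat3)"
  by (simp add: Phi_def mat_def vec_eq_iff forall_3)

lemma Phi_mult:
  fixes a b c d :: "'a::field"
  assumes "prime CHAR('a)" and "q0 = CHAR('a) ^ k"
  shows "Phi q0 a c ** Phi q0 b d = Phi q0 (a + b) (c + d + a ^ q0 * b)"
  using freshmans_dream'[OF assms, of a b]
  by (simp add: Phi_def matrix_matrix_mult_def vec_eq_iff forall_3 sum_3 algebra_simps)

lemma mem_KK_iff: "x \<in> KK q0 \<longleftrightarrow> (\<exists>a c. x = Phi q0 a c)"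
  by (auto simp: KK_def)

context
  fixes q0 k :: nat
  assumes CHAR_2: "CHAR('a::field) = 2" and q0_pow2: "q0 = 2 ^ k"
begin

lemma Phi_mult_CHAR_2:
  "Phi q0 a c ** Phi q0 b d = Phi q0 (a + b) (c + d + a ^ q0 * b)" for a b c d :: 'a
  by (rule Phi_mult) (simp_all add: CHAR_2 q0_pow2)

lemma matrix_inv_Phi:
  "matrix_inv (Phi q0 a c) = Phi q0 a (c + a ^ (q0 + 1))" for a c :: 'a
proof (rule matrix_inv_eqI)
  have "q0 > 0"
    by (simp add: q0_pow2)
  have "c + (c + a ^ (q0 + 1)) + a ^ q0 * a = (c + c) + (a ^ (q0 + 1) + a ^ (q0 + 1))"
    "c + a ^ (q0 + 1) + c + a ^ q0 * a = (c + c) + (a ^ (q0 + 1) + a ^ (q0 + 1))"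
    by (simp_all add: algebra_simps)
  then show "Phi q0 a c ** Phi q0 a (c + a ^ (q0 + 1)) = mat 1"
    and "Phi q0 a (c + a ^ (q0 + 1)) ** Phi q0 a c = mat 1"
    by (simp_all add: Phi_mult_CHAR_2 Phi_0_0 \<open>q0 > 0\<close> add_self_CHAR_2[OF CHAR_2])
qed

lemma matrix_inv_KK:
  assumes "x \<in> KK q0"
  shows "matrix_inv x \<in> KK q0 \<and> matrix_inv (matrix_inv x) = (x :: 'a mat3)"
proof -
  obtain a c where "x = Phi q0 a c"
    using assms by (auto simp: mem_KK_iff)
  moreover have "c + a ^ (q0 + 1) + a ^ (q0 + 1) = c"
    by (simp add: add.assoc add_self_CHAR_2[OF CHAR_2])
  ultimately show ?thesis
    by (auto simp: mem_KK_iff matrix_inv_Phi simp del: power_Suc)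
qed

lemma adj_Phi_Phi_0_iff:
  fixes u a c e :: 'a
  shows "adj q0 u (Phi q0 a c) (Phi q0 0 e) \<longleftrightarrow>
    a \<noteq> 0 \<and> e \<in> {c + u * a ^ (q0 + 1), c + u * a ^ (q0 + 1) + a ^ (q0 + 1)}"
proof -
  have "q0 > 0"
    by (simp add: q0_pow2)
  then have "Phi q0 a c ** matrix_inv (Phi q0 0 e) = Phi q0 a (c + e)"
    by (simp add: matrix_inv_Phi Phi_mult_CHAR_2)
  moreover have "c + e = v \<longleftrightarrow> e = c + v" for v
    by (metis add_self_CHAR_2[OF CHAR_2] add.assoc add.commute add_0)
  ultimately show ?thesis
    unfolding adj_def Omega_def by (auto simp: mem_KK_iff Phi_eq_iff algebra_simps)
qed

end

lemma stabE_fixes_Phi_0: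
  "\<sigma> \<in> stabE q0 u \<Longrightarrow> \<sigma> (Phi q0 0 e) = Phi q0 0 e"
  unfolding stabE_def Kprime_def Omega_inf_def by (cases "e = 0") auto

lemma stabE_adj_Phi_0_iff:
  assumes "\<sigma> \<in> stabE q0 u" and "x \<in> KK q0"
  shows "adj q0 u (\<sigma> x) (Phi q0 0 e) \<longleftrightarrow> adj q0 u x (Phi q0 0 e)"
proof -
  have "Phi q0 0 e \<in> KK q0"
    by (auto simp: mem_KK_iff)
  moreover have "\<forall>x\<in>KK q0. \<forall>y\<in>KK q0. adj q0 u (\<sigma> x) (\<sigma> y) \<longleftrightarrow> adj q0 u x y"
    using assms(1) by (simp add: stabE_def graph_aut_def)
  ultimately show ?thesis
    using assms(2) stabE_fixes_Phi_0[OF assms(1)] by metis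
qed

lemma stabE_fixes_or_inverts:
  fixes u :: "'a::{field,finite}"
  assumes "CHAR('a) = 2" and "q0 = 2 ^ k" and coprime: "coprime (q0 + 1) (CARD('a) - 1)"
    and \<sigma>: "\<sigma> \<in> stabE q0 u" and x: "x \<in> KK q0"
  shows "\<sigma> x = x \<or> \<sigma> x = matrix_inv x"
proof -
  note adj_iff = adj_Phi_Phi_0_iff[OF assms(1,2)]
  obtain a c where x_eq: "x = Phi q0 a c"
    using x by (auto simp: mem_KK_iff)
  have "\<sigma> x \<in> KK q0"
    using \<sigma> x by (auto simp: stabE_def graph_aut_def bij_betw_def)
  then obtain a' c' where \<sigma>x_eq: "\<sigma> x = Phi q0 a' c'"
    by (auto simp: mem_KK_iff)
  have same_neighbours:
    "{e. adj q0 u (Phi q0 a' c') (Phi q0 0 e)} = {e. adj q0 u (Phi q0 a c) (Phi q0 0 e)}"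
    using stabE_adj_Phi_0_iff[OF \<sigma> x] by (simp flip: x_eq \<sigma>x_eq)
  show ?thesis
  proof (cases "a = 0")
    case True
    then show ?thesis
      using stabE_fixes_Phi_0[OF \<sigma>] x_eq by simp
  next
    case False
    define A A' where "A = a ^ (q0 + 1)" and "A' = a' ^ (q0 + 1)"
    have "a' \<noteq> 0"
      using same_neighbours False unfolding adj_iff by auto
    then have "{c' + u * A', c' + u * A' + A'} = {c + u * A, c + u * A + A}"
      using same_neighbours False unfolding adj_iff A_def A'_def by auto
    then have "A' = A \<and> (c' + u * A' = c + u * A \<or> c' + u * A' = c + u * A + A)"
      by (rule doubleton_translate_eq_CHAR_2[OF assms(1)])
    then have "A' = A" and "c' = c \<or> c' = c + A"
      by (auto simp: add.commute add.left_commute)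
    moreover from \<open>A' = A\<close> have "a' = a"
      using power_eq_imp_eq_if_coprime_card[OF coprime \<open>a' \<noteq> 0\<close> False]
      by (simp add: A_def A'_def)
    ultimately have "\<sigma> x = Phi q0 a c \<or> \<sigma> x = Phi q0 a (c + A)"
      using \<sigma>x_eq by auto
    then show ?thesis
      by (simp add: x_eq matrix_inv_Phi[OF assms(1,2)] A_def)
  qed
qed

lemma stabE_fixes_or_swaps:
  fixes u :: "'a::{field,finite}"
  assumes "CHAR('a) = 2" and "q0 = 2 ^ k" and "coprime (q0 + 1) (CARD('a) - 1)"
    and "\<sigma> \<in> stabE q0 u"
  shows "fixes_or_swaps (KK q0) matrix_inv \<sigma>"
  using assms stabE_fixes_or_inverts[OF assms]
  unfolding fixes_or_swaps_def by (auto simp: stabE_def graph_aut_def bij_betw_def)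

theorem lemma8p1:
  fixes u :: "'a::{field,finite}" and f q0 :: nat
  assumes "CARD('a) = 2 ^ f" and "f \<ge> 4"
    and "\<exists>k. q0 = 2 ^ k" and "q0 < CARD('a)"
    and "gcd (CARD('a) - 1) (q0\<^sup>2 - 1) = 1"
    and "u \<in> U_set q0"
  shows "stabE q0 u = {id} \<or>
    ((\<forall>\<sigma>\<in>stabE q0 u. \<sigma> \<circ> \<sigma> = id) \<and>
     (\<forall>\<sigma>\<in>stabE q0 u. \<forall>\<tau>\<in>stabE q0 u. \<sigma> \<circ> \<tau> = \<tau> \<circ> \<sigma>) \<and>
     (\<forall>\<sigma>\<in>stabE q0 u. \<forall>a c. \<sigma> ` {Phi q0 a c, matrix_inv (Phi q0 a c)} =
                                 {Phi q0 a c, matrix_inv (Phi q0 a c)}))"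
proof -
  have CHAR_2: "CHAR('a) = 2"
    using CHAR_eq_2_if_card_eq_pow2[OF assms(1)] .
  obtain k where q0: "q0 = 2 ^ k"
    using assms(3) by blast
  have "q0\<^sup>2 - 1 = (q0 + 1) * (q0 - 1)"
    by (cases q0) (simp_all add: power2_eq_square)
  then have "coprime (CARD('a) - 1) ((q0 + 1) * (q0 - 1))"
    using assms(5) by (simp only: coprime_iff_gcd_eq_1)
  then have "coprime (q0 + 1) (CARD('a) - 1)"
    using coprime_mult_right_iff coprime_commute by blast
  then have swaps: "fixes_or_swaps (KK q0) matrix_inv \<sigma>" if "\<sigma> \<in> stabE q0 u" for \<sigma>
    using stabE_fixes_or_swaps[OF CHAR_2 q0 _ that] by simp
  note involution = matrix_inv_KK[OF CHAR_2 q0]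
  have "Phi q0 a c \<in> KK q0" for a c :: 'a
    by (auto simp: mem_KK_iff)
  then show ?thesis
    using fixes_or_swaps_comp_self[OF involution swaps]
      fixes_or_swaps_comp_commute[OF involution swaps swaps]
      fixes_or_swaps_image_pair[OF involution swaps]
    by blast
qed

end
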